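(* Let $\mathbf w_1,\dots,\mathbf w_K\in\mathbb R^d$ ($K\ge2$) and $k\in[K]$ with $\mathbf w_k\notin\operatorname{conv}(\{\mathbf w_j\}_{j\in[K]\setminus\{k\}})$. Then the problems $$\min_{\mathbf h\in\mathbb S^{d-1}}\max_{k'\ne k}\langle\mathbf w_{k'}-\mathbf w_k,\mathbf h\rangle\quad\text{and}\quad\min_{\|\mathbf h\|_2\le1}\max_{k'\ne k}\langle\mathbf w_{k'}-\mathbf w_k,\mathbf h\rangle$$ are equivalent, i.e. they have the same optimal solutions.
   Context: $\mathbb S^{d-1}$ is the unit sphere in $\mathbb R^d$; $\operatorname{conv}$ denotes convex hull. *)

theory Defs
  imports "HOL-Analysis.Analysis"
begin

definition margin_obj :: "nat \<Rightarrow> (nat \<Rightarrow> 'a::euclidean_space) \<Rightarrow> nat \<Rightarrow> 'a \<Rightarrow> real" where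
  "margin_obj K w k h = Max ((\<lambda>k'. inner (w k' - w k) h) ` ({1..K} - {k}))"

definition argmin_set :: "('a \<Rightarrow> real) \<Rightarrow> 'a set \<Rightarrow> 'a set" where
  "argmin_set f S = {h \<in> S. \<forall>h'\<in>S. f h \<le> f h'}"

end

theory Submission
  imports Defs
begin

text \<open>The objective is positively homogeneous, and strict separation of \<open>w k\<close> from the convex
  hull of the other points gives a direction in which it is negative. For a positively homogeneous
  function that takes a negative value, every point \<open>h\<close> of the ball with a negative value is
  improved by moving it radially to \<open>sgn h\<close>, strictly so if \<open>norm h < 1\<close>; so minimizers over the
  ball lie on the sphere and the two problems have the same minimizers.\<close>

lemma argmin_set_sphere_eq_cball:
  fixes f :: "'a::real_normed_vector \<Rightarrow> real"
  assumes homogeneous: "\<And>c x. c > 0 \<Longrightarrow> f (c *\<^sub>R x) = c * f x"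
    and negative: "f v < 0"
  shows "argmin_set f (sphere 0 1) = argmin_set f (cball 0 1)"
proof -
  have "f 0 = 2 * f 0" using homogeneous[of 2 0] by simp
  hence f_zero: "f 0 = 0" by simp
  have f_sgn: "f (sgn x) = f x / norm x" if "x \<noteq> 0" for x
    using homogeneous[of "1 / norm x" x] that by (simp add: sgn_div_norm divide_inverse_commute)
  have sgn_improves: "f (sgn x) \<le> f x"
    and sgn_improves_strict: "norm x < 1 \<Longrightarrow> f (sgn x) < f x"
    if "x \<in> cball 0 1" "f x < 0" for x
  proof -
    have "x \<noteq> 0" using that f_zero by auto
    hence "0 < norm x" "norm x \<le> 1" "f (sgn x) = f x / norm x" using that f_sgn by auto
    thus "f (sgn x) \<le> f x" "norm x < 1 \<Longrightarrow> f (sgn x) < f x"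
      using \<open>f x < 0\<close> by (auto simp: divide_le_eq divide_less_eq mult_le_cancel_left_neg)
  qed
  have "v \<noteq> 0" using negative f_zero by auto
  define u where "u = sgn v"
  have u: "u \<in> sphere 0 1" "f u < 0"
    using \<open>v \<noteq> 0\<close> negative f_sgn by (auto simp: u_def norm_sgn divide_neg_pos)
  show ?thesis
  proof (intro equalityI subsetI)
    fix h assume "h \<in> argmin_set f (sphere 0 1)"
    hence h: "h \<in> sphere 0 1" "\<And>y. y \<in> sphere 0 1 \<Longrightarrow> f h \<le> f y"
      by (auto simp: argmin_set_def)
    have "f h \<le> f y" if "y \<in> cball 0 1" for y
    proof (cases "f y < 0")
      case True
      hence "y \<noteq> 0" using f_zero by auto
      hence "f h \<le> f (sgn y)" using h(2) by (simp add: norm_sgn)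
      also have "\<dots> \<le> f y" using sgn_improves[OF that True] .
      finally show ?thesis .
    next
      case False
      thus ?thesis using h(2)[OF u(1)] u(2) by linarith
    qed
    thus "h \<in> argmin_set f (cball 0 1)" using h(1) by (auto simp: argmin_set_def)
  next
    fix h assume "h \<in> argmin_set f (cball 0 1)"
    hence h: "h \<in> cball 0 1" "\<And>y. y \<in> cball 0 1 \<Longrightarrow> f h \<le> f y"
      by (auto simp: argmin_set_def)
    have "f h < 0" using h(2)[of u] u by auto
    hence "h \<noteq> 0" using f_zero by auto
    have "norm h = 1"
    proof (rule ccontr)
      assume "norm h \<noteq> 1"
      hence "f (sgn h) < f h" using h(1) sgn_improves_strict[OF h(1) \<open>f h < 0\<close>] by simp
      moreover have "f h \<le> f (sgn h)" using h(2) \<open>h \<noteq> 0\<close> by (simp add: norm_sgn)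
      ultimately show False by simp
    qed
    thus "h \<in> argmin_set f (sphere 0 1)" using h(2) by (auto simp: argmin_set_def)
  qed
qed

lemma finite_convex_hull_separating_direction:
  fixes z :: "'a::euclidean_space"
  assumes "finite S" and "z \<notin> convex hull S"
  shows "\<exists>h. \<forall>x\<in>S. inner (x - z) h < 0"
proof -
  have "closed (convex hull S)"
    using \<open>finite S\<close> by (simp add: compact_imp_closed finite_imp_compact_convex_hull)
  then obtain a b where "inner a z < b" and "\<forall>x\<in>convex hull S. inner a x > b"
    using separating_hyperplane_closed_point[OF convex_convex_hull _ assms(2)] by blast
  have "inner (x - z) (- a) < 0" if "x \<in> S" for x
  proof -
    have "inner a x > b" using \<open>\<forall>x\<in>convex hull S. inner a x > b\<close> hull_inc[OF that] by blast
    thus ?thesis using \<open>inner a z < b\<close> by (simp add: inner_diff_right inner_commute)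
  qed
  thus ?thesis by blast
qed

lemma margin_obj_scaleR:
  assumes "{1..K} - {k} \<noteq> {}" and "c > 0"
  shows "margin_obj K w k (c *\<^sub>R h) = c * margin_obj K w k h"
proof -
  have "mono ((*) c)" using \<open>c > 0\<close> by (simp add: mono_def)
  thus ?thesis
    using mono_Max_commute[of "(*) c" "(\<lambda>j. inner (w j - w k) h) ` ({1..K} - {k})"] assms(1)
    by (simp add: margin_obj_def image_image)
qed

lemma margin_obj_less_0_iff:
  assumes "{1..K} - {k} \<noteq> {}"
  shows "margin_obj K w k h < 0 \<longleftrightarrow> (\<forall>j\<in>{1..K} - {k}. inner (w j - w k) h < 0)"
  using assms by (simp add: margin_obj_def)

lemma atLeastAtMost_minus_singleton_nonempty:
  fixes K k :: nat
  assumes "K \<ge> 2"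
  shows "{1..K} - {k} \<noteq> {}"
proof -
  have "1 \<in> {1..K} - {k} \<or> 2 \<in> {1..K} - {k}" using assms by auto
  thus ?thesis by blast
qed

theorem mainTheorem13:
  fixes w :: "nat \<Rightarrow> 'a::euclidean_space" and K k :: nat
  assumes "K \<ge> 2" and "k \<in> {1..K}"
    and "w k \<notin> convex hull (w ` ({1..K} - {k}))"
  shows "argmin_set (margin_obj K w k) (sphere 0 1) = argmin_set (margin_obj K w k) (cball 0 1)"
proof -
  have others: "{1..K} - {k} \<noteq> {}" using atLeastAtMost_minus_singleton_nonempty[OF assms(1)] .
  obtain v where "\<forall>x\<in>w ` ({1..K} - {k}). inner (x - w k) v < 0"
    using finite_convex_hull_separating_direction[OF _ assms(3)] by blast
  hence "margin_obj K w k v < 0" by (simp add: margin_obj_less_0_iff[OF others])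
  thus ?thesis
    using argmin_set_sphere_eq_cball margin_obj_scaleR[OF others] by blast
qed

end
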